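(* Consider the set of all bubbles, with output and input colours as defined in the context. Equip it with the partial composition $\mathfrak B_1\circ_i\mathfrak B_2$ given by the composition of the operad $\mathrm{CNCB}$ and defined exactly when $\mathrm{Out}(\mathfrak B_2)=\mathrm{In}_i(\mathfrak B_1)$, and add two units $\mathbf 1_1,\mathbf 1_2$ (where $\mathbf 1_c$ has arity $1$ and output and input colour $c$). This forms a $2$-coloured operad $\mathrm{Bulle}$. In particular, whenever $\mathrm{Out}(\mathfrak B_2)=\mathrm{In}_i(\mathfrak B_1)$, the $\mathrm{CNCB}$-composite $\mathfrak B_1\circ_i\mathfrak B_2$ is again a bubble.
   Context: For $n\ge2$, a bicoloured noncrossing configuration (BNC) of size $n$ is a regular polygon with $n+1$ vertices numbered $1,\dots,n+1$ clockwise, together with two disjoint sets of arcs, blue arcs and red arcs. An arc is a pair $(i,j)$ with $1\le i<j\le n+1$. The arcs $(i,i+1)$, $1\le i\le n$, are the edges ($(i,i+1)$ is the $i$th edge), $(1,n+1)$ is the base, and all other arcs are diagonals. Coloured (blue or red) arcs must be pairwise noncrossing, where $(i,j)$ and $(k,l)$ cross iff $i<k<j<l$ or $k<i<l<j$, and red arcs must be diagonals. Other arcs are uncoloured. There is one BNC of size $1$, a single blue arc. The operad $\mathrm{CNCB}$ has the BNCs as elements (arity = size). Its composition $\mathfrak C\circ_i\mathfrak D$ ($\mathfrak C$ of size $n$, $\mathfrak D$ of size $m$) glues the base of $\mathfrak D$ onto the $i$th edge of $\mathfrak C$. Arcs $(a,b)$ of $\mathfrak C$ become $(\sigma(a),\sigma(b))$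 with $\sigma(v)=v$ for $v\le i$ and $\sigma(v)=v+m-1$ for $v>i$, and arcs $(a,b)$ of $\mathfrak D$ become $(a+i-1,b+i-1)$; all keep their colours. The exception is the glued arc $(i,i+m)$, which is red if the $i$th edge of $\mathfrak C$ and the base of $\mathfrak D$ are both uncoloured, blue if both are blue, and uncoloured otherwise. A bubble is a BNC of size at least $2$ with no coloured diagonal. A BNC is based if its base is blue. For a bubble $\mathfrak B$ of size $n$, its output colour is $\mathrm{Out}(\mathfrak B)=1$ if $\mathfrak B$ is based and $2$ otherwise. Its $i$th input colour $\mathrm{In}_i(\mathfrak B)$, for $i\in[n]$, is $1$ if the $i$th edge of $\mathfrak B$ is uncoloured and $2$ if it is blue. *)

theory Defs
  imports Main
begin

text \<open>A BNC of size n: polygon with vertices 1..n+1, a set of blue arcs and a set of red arcs.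
  Arcs are pairs (i,j) with 1 <= i < j <= n+1.\<close>

record bnc =
  sz   :: nat
  blue :: "(nat \<times> nat) set"
  red  :: "(nat \<times> nat) set"

definition is_arc :: "nat \<Rightarrow> nat \<times> nat \<Rightarrow> bool" where
  "is_arc n a \<longleftrightarrow> 1 \<le> fst a \<and> fst a < snd a \<and> snd a \<le> n + 1"

definition is_edge :: "nat \<Rightarrow> nat \<times> nat \<Rightarrow> bool" where
  "is_edge n a \<longleftrightarrow> (\<exists>i. 1 \<le> i \<and> i \<le> n \<and> a = (i, i + 1))"

definition is_base :: "nat \<Rightarrow> nat \<times> nat \<Rightarrow> bool" where
  "is_base n a \<longleftrightarrow> a = (1, n + 1)"

definition is_diagonal :: "nat \<Rightarrow> nat \<times> nat \<Rightarrow> bool" where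
  "is_diagonal n a \<longleftrightarrow> is_arc n a \<and> \<not> is_edge n a \<and> \<not> is_base n a"

definition crosses :: "nat \<times> nat \<Rightarrow> nat \<times> nat \<Rightarrow> bool" where
  "crosses a b \<longleftrightarrow>
     (fst a < fst b \<and> fst b < snd a \<and> snd a < snd b) \<or>
     (fst b < fst a \<and> fst a < snd b \<and> snd b < snd a)"

definition is_bnc :: "bnc \<Rightarrow> bool" where
  "is_bnc C \<longleftrightarrow>
     (sz C \<ge> 2 \<and>
      (\<forall>a \<in> blue C. is_arc (sz C) a) \<and>
      (\<forall>a \<in> red C. is_diagonal (sz C) a) \<and>
      blue C \<inter> red C = {} \<and>
      (\<forall>a \<in> blue C \<union> red C. \<forall>b \<in> blue C \<union> red C. \<not> crosses a b))
     \<or> C = \<lparr>sz = 1, blue = {(1, 2)}, red = {}\<rparr>"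

definition cncb_comp :: "bnc \<Rightarrow> nat \<Rightarrow> bnc \<Rightarrow> bnc" where
  "cncb_comp C i D =
     (let n = sz C; m = sz D;
          \<sigma> = (\<lambda>v::nat. if v \<le> i then v else v + m - 1);
          mapC = (\<lambda>(a, b). (\<sigma> a, \<sigma> b));
          shD = (\<lambda>(a, b). (a + i - 1, b + i - 1));
          g = (i, i + m);
          edgeC = (i, i + 1);
          baseD = (1, m + 1);
          glue_blue = (edgeC \<in> blue C \<and> baseD \<in> blue D);
          glue_red = (edgeC \<notin> blue C \<and> edgeC \<notin> red C \<and> baseD \<notin> blue D \<and> baseD \<notin> red D)
      in \<lparr> sz = n + m - 1,
           blue = ((mapC ` blue C \<union> shD ` blue D) - {g}) \<union> (if glue_blue then {g} else {}),
           red  = ((mapC ` red C \<union> shD ` red D) - {g}) \<union> (if glue_red then {g} else {}) \<rparr>)"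

definition is_bubble :: "bnc \<Rightarrow> bool" where
  "is_bubble B \<longleftrightarrow> is_bnc B \<and> sz B \<ge> 2 \<and>
     (\<forall>a \<in> blue B \<union> red B. \<not> is_diagonal (sz B) a)"

definition based :: "bnc \<Rightarrow> bool" where
  "based B \<longleftrightarrow> (1, sz B + 1) \<in> blue B"

definition Out :: "bnc \<Rightarrow> nat" where
  "Out B = (if based B then 1 else 2)"

definition In :: "bnc \<Rightarrow> nat \<Rightarrow> nat" where
  "In B i = (if (i, i + 1) \<in> blue B then 2 else 1)"

datatype bulle = Unit nat | Bub bnc

definition Bulle :: "bulle set" where
  "Bulle = {Unit 1, Unit 2} \<union> Bub ` {B. is_bubble B}"

fun arity :: "bulle \<Rightarrow> nat" where
  "arity (Unit c) = 1"
| "arity (Bub B) = sz B"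

fun out :: "bulle \<Rightarrow> nat" where
  "out (Unit c) = c"
| "out (Bub B) = Out B"

fun inp :: "bulle \<Rightarrow> nat \<Rightarrow> nat" where
  "inp (Unit c) j = c"
| "inp (Bub B) j = In B j"

text \<open>Partial composition (meaningful when 1 <= i <= arity x and out y = inp x i).\<close>
fun bcomp :: "bulle \<Rightarrow> nat \<Rightarrow> bulle \<Rightarrow> bulle" where
  "bcomp (Unit c) i y = y"
| "bcomp (Bub B) i (Unit c) = Bub B"
| "bcomp (Bub B1) i (Bub B2) = Bub (cncb_comp B1 i B2)"

end

theory Submission
  imports Defs
begin

text \<open>A bubble has no red arcs, and its only possible blue arcs are its edges and its base; so a
  bubble is determined by its size, its output colour and its sequence of input colours. If
  \<open>Out B\<^sub>2 = In\<^sub>i B\<^sub>1\<close>, exactly one of the two glued arcs (the \<open>i\<close>-th edge of \<open>B\<^sub>1\<close>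
  and the base of \<open>B\<^sub>2\<close>) is blue and neither is red, so the glued arc becomes an uncoloured
  diagonal. Hence the composite is again a bubble; it is based iff \<open>B\<^sub>1\<close> is, and its input
  colours are those of \<open>B\<^sub>1\<close> with the \<open>i\<close>-th one replaced by the input colours of \<open>B\<^sub>2\<close>.
  The operad axioms thus reduce to associativity and commutativity of this substitution of
  colour sequences.\<close>

definition graft :: "(nat \<Rightarrow> 'a) \<Rightarrow> nat \<Rightarrow> nat \<Rightarrow> (nat \<Rightarrow> 'a) \<Rightarrow> nat \<Rightarrow> 'a" where
  "graft f i m g k = (if k < i then f k else if k < i + m then g (k - i + 1) else f (k - m + 1))"

lemma graft_assoc:
  assumes "1 \<le> j" "j \<le> m" "1 \<le> p"
  shows "graft f i (m + p - 1) (graft g j p h) = graft (graft f i m g) (i + j - 1) p h"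
  using assms
  by (auto simp: graft_def fun_eq_iff intro!: arg_cong[of _ _ f] arg_cong[of _ _ g] arg_cong[of _ _ h])

lemma graft_commute:
  assumes "i < j" "1 \<le> m" "1 \<le> p"
  shows "graft (graft f i m g) (j + m - 1) p h = graft (graft f j p h) i m g"
  using assms
  by (auto simp: graft_def fun_eq_iff intro!: arg_cong[of _ _ f] arg_cong[of _ _ g] arg_cong[of _ _ h])

lemma graft_before: "k < i \<Longrightarrow> graft f i m g k = f k"
  by (simp add: graft_def)

lemma graft_inside: "i \<le> k \<Longrightarrow> k < i + m \<Longrightarrow> graft f i m g k = g (k - i + 1)"
  by (simp add: graft_def)

lemma graft_after: "i + m \<le> k \<Longrightarrow> graft f i m g k = f (k - m + 1)"
  by (simp add: graft_def)

lemma edges_and_base_not_crossing: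
  assumes "is_edge n a \<or> is_base n a" "is_edge n b \<or> is_base n b"
  shows "\<not> crosses a b"
  using assms unfolding is_edge_def is_base_def crosses_def by auto

lemma is_bubble_iff:
  "is_bubble B \<longleftrightarrow> 2 \<le> sz B \<and> red B = {} \<and> (\<forall>a \<in> blue B. is_edge (sz B) a \<or> is_base (sz B) a)"
proof
  assume B: "is_bubble B"
  then have "2 \<le> sz B" unfolding is_bubble_def by simp
  then have "\<forall>a \<in> blue B. is_arc (sz B) a" "\<forall>a \<in> red B. is_diagonal (sz B) a"
    using B unfolding is_bubble_def is_bnc_def by auto
  with B \<open>2 \<le> sz B\<close>
  show "2 \<le> sz B \<and> red B = {} \<and> (\<forall>a \<in> blue B. is_edge (sz B) a \<or> is_base (sz B) a)"
    unfolding is_bubble_def is_diagonal_def by blast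
next
  assume h: "2 \<le> sz B \<and> red B = {} \<and> (\<forall>a \<in> blue B. is_edge (sz B) a \<or> is_base (sz B) a)"
  then have "\<forall>a \<in> blue B. is_arc (sz B) a"
    by (auto simp: is_edge_def is_base_def is_arc_def)
  moreover have "\<forall>a \<in> blue B. \<forall>b \<in> blue B. \<not> crosses a b"
    using h edges_and_base_not_crossing by blast
  ultimately show "is_bubble B"
    using h unfolding is_bubble_def is_bnc_def is_diagonal_def by simp
qed

lemma bubble_sz_ge_2: "is_bubble B \<Longrightarrow> 2 \<le> sz B"
  by (simp add: is_bubble_iff)

lemma blue_bubble_iff:
  assumes "is_bubble B"
  shows "x \<in> blue B \<longleftrightarrow>
    (\<exists>k. 1 \<le> k \<and> k \<le> sz B \<and> x = (k, k + 1) \<and> (k, k + 1) \<in> blue B) \<or> (x = (1, sz B + 1) \<and> based B)"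
  using assms unfolding is_bubble_iff is_edge_def is_base_def based_def by auto

lemma blue_arc_of_bubble:
  assumes "is_bubble B" "(a, b) \<in> blue B"
  shows "(1 \<le> a \<and> a \<le> sz B \<and> b = a + 1) \<or> (a = 1 \<and> b = sz B + 1)"
  using assms unfolding is_bubble_iff is_edge_def is_base_def by fastforce

lemma bubble_edge_range:
  assumes "is_bubble B" "(a, a + 1) \<in> blue B"
  shows "1 \<le> a \<and> a \<le> sz B"
  using blue_arc_of_bubble[OF assms] by auto

lemma In_eq_In_iff: "In A k = In B k \<longleftrightarrow> ((k, k + 1) \<in> blue A \<longleftrightarrow> (k, k + 1) \<in> blue B)"
  unfolding In_def by simp

lemma Out_eq_Out_iff: "Out A = Out B \<longleftrightarrow> (based A \<longleftrightarrow> based B)"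
  unfolding Out_def by simp

lemma bubble_eqI:
  assumes "is_bubble A" "is_bubble B" "sz A = sz B" "Out A = Out B" "In A = In B"
  shows "A = B"
proof -
  have based: "based A \<longleftrightarrow> based B"
    using assms(4) by (simp add: Out_eq_Out_iff)
  have edges: "(k, k + 1) \<in> blue A \<longleftrightarrow> (k, k + 1) \<in> blue B" for k
    using fun_cong[OF assms(5), of k] by (simp only: In_eq_In_iff)
  have "x \<in> blue A \<longleftrightarrow> x \<in> blue B" for x
    unfolding blue_bubble_iff[OF assms(1), of x] blue_bubble_iff[OF assms(2), of x] assms(3) edges based ..
  then have "blue A = blue B" by (simp add: set_eq_iff)
  moreover have "red A = red B"
    using assms(1,2) by (simp add: is_bubble_iff)
  ultimately show ?thesis
    using assms(3) by (intro bnc.equality) simp_all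
qed

definition lift_vertex :: "nat \<Rightarrow> nat \<Rightarrow> nat \<Rightarrow> nat" where
  "lift_vertex i m v = (if v \<le> i then v else v + m - 1)"

locale composable_bubbles =
  fixes B1 B2 :: bnc and i :: nat
  assumes bubble1: "is_bubble B1" and bubble2: "is_bubble B2"
    and i_pos: "1 \<le> i" and i_le: "i \<le> sz B1"
    and colours: "Out B2 = In B1 i"
begin

abbreviation "n \<equiv> sz B1"
abbreviation "m \<equiv> sz B2"

lemma n_ge_2: "2 \<le> n" and m_ge_2: "2 \<le> m"
  using bubble1 bubble2 by (simp_all add: bubble_sz_ge_2)

lemma glued_edge_blue_iff: "(i, i + 1) \<in> blue B1 \<longleftrightarrow> (1, m + 1) \<notin> blue B2"
  using colours unfolding Out_def In_def based_def
  by (cases "(i, i + 1) \<in> blue B1"; cases "(1, m + 1) \<in> blue B2") simp_all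

lemma sz_comp: "sz (cncb_comp B1 i B2) = n + m - 1"
  by (simp add: cncb_comp_def Let_def)

lemma red_comp: "red (cncb_comp B1 i B2) = {}"
  using bubble1 bubble2 glued_edge_blue_iff by (simp add: cncb_comp_def Let_def is_bubble_iff)

lemma blue_comp_image:
  "blue (cncb_comp B1 i B2) =
     ((\<lambda>(a, b). (lift_vertex i m a, lift_vertex i m b)) ` blue B1
      \<union> (\<lambda>(a, b). (a + i - 1, b + i - 1)) ` blue B2) - {(i, i + m)}"
  using glued_edge_blue_iff by (simp add: cncb_comp_def Let_def lift_vertex_def)

abbreviation comp_blue_arcs :: "(nat \<times> nat) set" where
  "comp_blue_arcs \<equiv>
     {(a, a + 1) | a. 1 \<le> a \<and> a < i \<and> (a, a + 1) \<in> blue B1}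
   \<union> {(a + m - 1, a + m) | a. i < a \<and> a \<le> n \<and> (a, a + 1) \<in> blue B1}
   \<union> {(a + i - 1, a + i) | a. 1 \<le> a \<and> a \<le> m \<and> (a, a + 1) \<in> blue B2}
   \<union> (if based B1 then {(1, n + m)} else {})"

lemma blue_comp_subset: "blue (cncb_comp B1 i B2) \<subseteq> comp_blue_arcs"
proof
  fix x
  assume x: "x \<in> blue (cncb_comp B1 i B2)"
  then have not_glued: "x \<noteq> (i, i + m)"
    unfolding blue_comp_image by simp
  from x consider (outer) a b where "(a, b) \<in> blue B1" "x = (lift_vertex i m a, lift_vertex i m b)"
    | (inner) a b where "(a, b) \<in> blue B2" "x = (a + i - 1, b + i - 1)"
    unfolding blue_comp_image by auto
  then show "x \<in> comp_blue_arcs"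
  proof cases
    case outer
    from blue_arc_of_bubble[OF bubble1 outer(1)]
    consider "1 \<le> a" "a \<le> n" "b = a + 1" | "a = 1" "b = n + 1" by auto
    then show ?thesis
    proof cases
      case 1
      with outer not_glued m_ge_2 show ?thesis
        by (cases "a < i") (auto simp: lift_vertex_def)
    next
      case 2
      with outer i_pos i_le m_ge_2 show ?thesis
        by (simp add: lift_vertex_def based_def)
    qed
  next
    case inner
    from blue_arc_of_bubble[OF bubble2 inner(1)]
    consider "1 \<le> a" "a \<le> m" "b = a + 1" | "a = 1" "b = m + 1" by auto
    then show ?thesis
    proof cases
      case 1
      with inner i_pos show ?thesis by auto
    next
      case 2
      with inner not_glued show ?thesis by simp
    qed
  qed
qed

lemma comp_blue_arcs_subset: "comp_blue_arcs \<subseteq> blue (cncb_comp B1 i B2)"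
proof
  fix x
  assume "x \<in> comp_blue_arcs"
  then consider (left) a where "a < i" "(a, a + 1) \<in> blue B1" "x = (a, a + 1)"
    | (right) a where "i < a" "(a, a + 1) \<in> blue B1" "x = (a + m - 1, a + m)"
    | (inner) a where "1 \<le> a" "(a, a + 1) \<in> blue B2" "x = (a + i - 1, a + i)"
    | (base) "based B1" "x = (1, n + m)"
    by (auto split: if_splits)
  then show "x \<in> blue (cncb_comp B1 i B2)"
  proof cases
    case left
    then show ?thesis unfolding blue_comp_image
      by (intro DiffI UnI1 rev_image_eqI[of "(a, a + 1)"]) (auto simp: lift_vertex_def)
  next
    case right
    then show ?thesis unfolding blue_comp_image using m_ge_2
      by (intro DiffI UnI1 rev_image_eqI[of "(a, a + 1)"]) (auto simp: lift_vertex_def)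
  next
    case inner
    then show ?thesis unfolding blue_comp_image using i_pos m_ge_2
      by (intro DiffI UnI2 rev_image_eqI[of "(a, a + 1)"]) auto
  next
    case base
    then show ?thesis unfolding blue_comp_image using i_pos i_le n_ge_2
      by (intro DiffI UnI1 rev_image_eqI[of "(1, n + 1)"]) (auto simp: lift_vertex_def based_def)
  qed
qed

lemma blue_comp: "blue (cncb_comp B1 i B2) = comp_blue_arcs"
  using blue_comp_subset comp_blue_arcs_subset by (rule subset_antisym)

lemma based_comp: "based (cncb_comp B1 i B2) \<longleftrightarrow> based B1"
  using n_ge_2 m_ge_2 by (auto simp: based_def sz_comp blue_comp)

lemma edge_comp:
  "(j, j + 1) \<in> blue (cncb_comp B1 i B2) \<longleftrightarrow>
     graft (\<lambda>k. (k, k + 1) \<in> blue B1) i m (\<lambda>k. (k, k + 1) \<in> blue B2) j"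
proof -
  consider "j < i" | "i \<le> j" "j < i + m" | "i + m \<le> j" by linarith
  then show ?thesis
  proof cases
    case 1
    then show ?thesis
      using n_ge_2 m_ge_2 bubble_edge_range[OF bubble1, of j]
      by (auto simp: blue_comp graft_def)
  next
    case 2
    then have "j = (j - i + 1) + i - 1" by simp
    then show ?thesis
      using 2 n_ge_2 m_ge_2 bubble_edge_range[OF bubble1, of j]
        bubble_edge_range[OF bubble2, of "j - i + 1"]
      by (auto simp: blue_comp graft_def)
  next
    case 3
    then have "j = (j - m + 1) + m - 1" by simp
    then show ?thesis
      using 3 n_ge_2 m_ge_2 bubble_edge_range[OF bubble1, of "j - m + 1"]
      by (auto simp: blue_comp graft_def)
  qed
qed

lemma In_comp: "In (cncb_comp B1 i B2) = graft (In B1) i m (In B2)"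
proof
  fix j
  have "In (cncb_comp B1 i B2) j = (if graft (\<lambda>k. (k, k + 1) \<in> blue B1) i m (\<lambda>k. (k, k + 1) \<in> blue B2) j then 2 else 1)"
    unfolding In_def edge_comp ..
  also have "\<dots> = graft (In B1) i m (In B2) j"
    by (simp add: graft_def In_def)
  finally show "In (cncb_comp B1 i B2) j = graft (In B1) i m (In B2) j" .
qed

lemma bubble_comp: "is_bubble (cncb_comp B1 i B2)"
proof -
  have "is_edge (n + m - 1) x \<or> is_base (n + m - 1) x" if "x \<in> blue (cncb_comp B1 i B2)" for x
    using that n_ge_2 m_ge_2 i_pos i_le
    by (auto simp: blue_comp is_edge_def is_base_def split: if_splits)
  then show ?thesis
    using n_ge_2 m_ge_2 by (simp add: is_bubble_iff sz_comp red_comp)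
qed

lemma Out_comp: "Out (cncb_comp B1 i B2) = Out B1"
  unfolding Out_def based_comp ..

end

lemma cncb_comp_bubbles:
  assumes "is_bubble B1" "is_bubble B2" "1 \<le> i" "i \<le> sz B1" "Out B2 = In B1 i"
  shows "is_bubble (cncb_comp B1 i B2)"
    and "sz (cncb_comp B1 i B2) = sz B1 + sz B2 - 1"
    and "Out (cncb_comp B1 i B2) = Out B1"
    and "In (cncb_comp B1 i B2) = graft (In B1) i (sz B2) (In B2)"
proof -
  interpret composable_bubbles B1 B2 i
    using assms by unfold_locales
  show "is_bubble (cncb_comp B1 i B2)" by (rule bubble_comp)
  show "sz (cncb_comp B1 i B2) = sz B1 + sz B2 - 1" by (rule sz_comp)
  show "Out (cncb_comp B1 i B2) = Out B1" by (rule Out_comp)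
  show "In (cncb_comp B1 i B2) = graft (In B1) i (sz B2) (In B2)" by (rule In_comp)
qed

lemma cncb_comp_assoc:
  assumes B: "is_bubble B1" "is_bubble B2" "is_bubble B3"
    and i: "1 \<le> i" "i \<le> sz B1" and j: "1 \<le> j" "j \<le> sz B2"
    and colours: "Out B2 = In B1 i" "Out B3 = In B2 j"
  shows "cncb_comp B1 i (cncb_comp B2 j B3) = cncb_comp (cncb_comp B1 i B2) (i + j - 1) B3"
proof -
  note B23 = cncb_comp_bubbles[OF B(2,3) j colours(2)]
  note B12 = cncb_comp_bubbles[OF B(1,2) i colours(1)]
  have "Out (cncb_comp B2 j B3) = In B1 i"
    using colours(1) by (simp add: B23)
  note L = cncb_comp_bubbles[OF B(1) B23(1) i this]
  have "In (cncb_comp B1 i B2) (i + j - 1) = In B2 (i + j - 1 - i + 1)"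
    using i j by (simp add: B12 graft_inside)
  then have "1 \<le> i + j - 1" "i + j - 1 \<le> sz (cncb_comp B1 i B2)"
    "Out B3 = In (cncb_comp B1 i B2) (i + j - 1)"
    using i j colours(2) by (simp_all add: B12)
  note R = cncb_comp_bubbles[OF B12(1) B(3) this]
  show ?thesis
  proof (rule bubble_eqI[OF L(1) R(1)])
    show "sz (cncb_comp B1 i (cncb_comp B2 j B3)) = sz (cncb_comp (cncb_comp B1 i B2) (i + j - 1) B3)"
      unfolding L(2) R(2) B12(2) B23(2) using bubble_sz_ge_2[OF B(2)] bubble_sz_ge_2[OF B(3)] by simp
    show "Out (cncb_comp B1 i (cncb_comp B2 j B3)) = Out (cncb_comp (cncb_comp B1 i B2) (i + j - 1) B3)"
      unfolding L(3) R(3) B12(3) ..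
    show "In (cncb_comp B1 i (cncb_comp B2 j B3)) = In (cncb_comp (cncb_comp B1 i B2) (i + j - 1) B3)"
      unfolding L(4) R(4) B12(4) B23(2,4)
      using j bubble_sz_ge_2[OF B(3)] by (intro graft_assoc) simp_all
  qed
qed

lemma cncb_comp_commute:
  assumes B: "is_bubble B1" "is_bubble B2" "is_bubble B3"
    and ij: "1 \<le> i" "i < j" "j \<le> sz B1"
    and colours: "Out B2 = In B1 i" "Out B3 = In B1 j"
  shows "cncb_comp (cncb_comp B1 i B2) (j + sz B2 - 1) B3 = cncb_comp (cncb_comp B1 j B3) i B2"
proof -
  have "i \<le> sz B1" "1 \<le> j" using ij by simp_all
  note B12 = cncb_comp_bubbles[OF B(1,2) ij(1) this(1) colours(1)]
  note B13 = cncb_comp_bubbles[OF B(1,3) \<open>1 \<le> j\<close> ij(3) colours(2)]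
  have "In (cncb_comp B1 i B2) (j + sz B2 - 1) = In B1 (j + sz B2 - 1 - sz B2 + 1)"
    using ij bubble_sz_ge_2[OF B(2)] by (simp add: B12 graft_after)
  then have "1 \<le> j + sz B2 - 1" "j + sz B2 - 1 \<le> sz (cncb_comp B1 i B2)"
    "Out B3 = In (cncb_comp B1 i B2) (j + sz B2 - 1)"
    using ij colours(2) bubble_sz_ge_2[OF B(2)] by (simp_all add: B12)
  note L = cncb_comp_bubbles[OF B12(1) B(3) this]
  have "i \<le> sz (cncb_comp B1 j B3)" "Out B2 = In (cncb_comp B1 j B3) i"
    using ij colours(1) by (simp_all add: B13 graft_before)
  note R = cncb_comp_bubbles[OF B13(1) B(2) ij(1) this]
  show ?thesis
  proof (rule bubble_eqI[OF L(1) R(1)])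
    show "sz (cncb_comp (cncb_comp B1 i B2) (j + sz B2 - 1) B3) = sz (cncb_comp (cncb_comp B1 j B3) i B2)"
      unfolding L(2) R(2) B12(2) B13(2) using bubble_sz_ge_2[OF B(2)] bubble_sz_ge_2[OF B(3)] by simp
    show "Out (cncb_comp (cncb_comp B1 i B2) (j + sz B2 - 1) B3) = Out (cncb_comp (cncb_comp B1 j B3) i B2)"
      unfolding L(3) R(3) B12(3) B13(3) ..
    show "In (cncb_comp (cncb_comp B1 i B2) (j + sz B2 - 1) B3) = In (cncb_comp (cncb_comp B1 j B3) i B2)"
      unfolding L(4) R(4) B12(4) B13(4)
      using ij(2) bubble_sz_ge_2[OF B(2)] bubble_sz_ge_2[OF B(3)] by (intro graft_commute) simp_all
  qed
qed

lemma Bub_in_Bulle_iff [simp]: "Bub B \<in> Bulle \<longleftrightarrow> is_bubble B"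
  by (auto simp: Bulle_def)

lemma Unit_in_Bulle_iff [simp]: "Unit c \<in> Bulle \<longleftrightarrow> c = 1 \<or> c = 2"
  by (auto simp: Bulle_def)

lemma bcomp_right_unit: "bcomp x i (Unit (inp x i)) = x"
  by (cases x) simp_all

lemma bcomp_closed:
  assumes x: "x \<in> Bulle" and y: "y \<in> Bulle" and i: "1 \<le> i" "i \<le> arity x"
    and colour: "out y = inp x i"
  shows "bcomp x i y \<in> Bulle \<and> arity (bcomp x i y) = arity x + arity y - 1 \<and> out (bcomp x i y) = out x
    \<and> (\<forall>j. 1 \<le> j \<longrightarrow> j \<le> arity x + arity y - 1 \<longrightarrow> inp (bcomp x i y) j = graft (inp x) i (arity y) (inp y) j)"
proof (cases x)
  case (Unit c)
  with y i colour show ?thesis by (simp add: graft_def)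
next
  case (Bub B1)
  show ?thesis
  proof (cases y)
    case (Unit c)
    with \<open>x = Bub B1\<close> x i colour show ?thesis by (auto simp: graft_def less_Suc_eq)
  next
    case (Bub B2)
    with \<open>x = Bub B1\<close> x y i colour show ?thesis by (simp add: cncb_comp_bubbles graft_def)
  qed
qed

lemma bcomp_assoc:
  assumes "x \<in> Bulle" "y \<in> Bulle" "z \<in> Bulle"
    and "1 \<le> i" "i \<le> arity x" "1 \<le> j" "j \<le> arity y"
    and "out y = inp x i" "out z = inp y j"
  shows "bcomp x i (bcomp y j z) = bcomp (bcomp x i y) (i + j - 1) z"
  using assms by (cases x; cases y; cases z) (auto simp: cncb_comp_assoc)

lemma bcomp_commute:
  assumes "x \<in> Bulle" "y \<in> Bulle" "z \<in> Bulle"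
    and "1 \<le> i" "i < j" "j \<le> arity x"
    and "out y = inp x i" "out z = inp x j"
  shows "bcomp (bcomp x i y) (j + arity y - 1) z = bcomp (bcomp x j z) i y"
  using assms by (cases x; cases y; cases z) (auto simp: cncb_comp_commute[simplified])

theorem proposition2p2:
  shows
    \<comment> \<open>in particular: the CNCB-composite of bubbles with matching colours is a bubble\<close>
    "(\<forall>B1 B2 i. is_bubble B1 \<longrightarrow> is_bubble B2 \<longrightarrow> 1 \<le> i \<longrightarrow> i \<le> sz B1 \<longrightarrow>
        Out B2 = In B1 i \<longrightarrow> is_bubble (cncb_comp B1 i B2))
   \<and> \<comment> \<open>closure and colour/arity compatibility of the partial composition\<close>
     (\<forall>x \<in> Bulle. \<forall>y \<in> Bulle. \<forall>i. 1 \<le> i \<longrightarrow> i \<le> arity x \<longrightarrow> out y = inp x i \<longrightarrow>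
        bcomp x i y \<in> Bulle
        \<and> arity (bcomp x i y) = arity x + arity y - 1
        \<and> out (bcomp x i y) = out x
        \<and> (\<forall>j. 1 \<le> j \<longrightarrow> j \<le> arity x + arity y - 1 \<longrightarrow>
             inp (bcomp x i y) j =
               (if j < i then inp x j
                else if j < i + arity y then inp y (j - i + 1)
                else inp x (j - arity y + 1))))
   \<and> \<comment> \<open>units\<close>
     (\<forall>c \<in> {1, 2}. arity (Unit c) = 1 \<and> out (Unit c) = c \<and> inp (Unit c) 1 = c)
   \<and> (\<forall>x \<in> Bulle. bcomp (Unit (out x)) 1 x = x
        \<and> (\<forall>i. 1 \<le> i \<longrightarrow> i \<le> arity x \<longrightarrow> bcomp x i (Unit (inp x i)) = x))
   \<and> \<comment> \<open>sequential associativity\<close>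
     (\<forall>x \<in> Bulle. \<forall>y \<in> Bulle. \<forall>z \<in> Bulle. \<forall>i j.
        1 \<le> i \<longrightarrow> i \<le> arity x \<longrightarrow> 1 \<le> j \<longrightarrow> j \<le> arity y \<longrightarrow>
        out y = inp x i \<longrightarrow> out z = inp y j \<longrightarrow>
        bcomp x i (bcomp y j z) = bcomp (bcomp x i y) (i + j - 1) z)
   \<and> \<comment> \<open>parallel associativity\<close>
     (\<forall>x \<in> Bulle. \<forall>y \<in> Bulle. \<forall>z \<in> Bulle. \<forall>i j.
        1 \<le> i \<longrightarrow> i < j \<longrightarrow> j \<le> arity x \<longrightarrow>
        out y = inp x i \<longrightarrow> out z = inp x j \<longrightarrow>
        bcomp (bcomp x i y) (j + arity y - 1) z = bcomp (bcomp x j z) i y)"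
proof (intro conjI)
  show "\<forall>B1 B2 i. is_bubble B1 \<longrightarrow> is_bubble B2 \<longrightarrow> 1 \<le> i \<longrightarrow> i \<le> sz B1 \<longrightarrow>
      Out B2 = In B1 i \<longrightarrow> is_bubble (cncb_comp B1 i B2)"
    using cncb_comp_bubbles(1) by blast
qed (use bcomp_closed bcomp_right_unit bcomp_assoc bcomp_commute in \<open>auto simp: graft_def\<close>)

end
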